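(* Let $\mathbb X=\langle\omega_1,\rho\rangle$ and $\mathbb Y=\langle\omega_1,\sigma\rangle$, where $\rho$ is the equivalence relation with classes $2=\{0,1\}$, $\omega\setminus2$, and $\{\alpha\}$ for $\omega\le\alpha<\omega_1$; and $\sigma$ is the equivalence relation with classes $\{n\}$ for $n\in\omega$ and $\omega_1\setminus\omega$. Then $\mathbb X\equiv_{\mathcal P_{\infty\omega}}\mathbb Y$, $\mathbb X\not\equiv\mathbb Y$, and $\mathbb X\not\sim_c\mathbb Y$.
   Context: The language has one binary relation symbol $R$. A condensation from $\langle X,\rho\rangle$ onto $\langle Y,\sigma\rangle$ is a bijection $F:X\to Y$ with $x\,\rho\,x'\Rightarrow F(x)\,\sigma\,F(x')$; $\mathbb X\sim_c\mathbb Y$ means condensations exist in both directions. $\equiv$ is first order elementary equivalence. $\mathcal P_0$ consists of all atomic formulas ($v_\alpha=v_\beta$, $R(v_\alpha,v_\beta)$) and all $\neg\,v_\alpha=v_\beta$; $\mathcal P_{\infty\omega}$ is the closure of $\mathcal P_0$ under $\forall v$, $\exists v$ and conjunctions and disjunctions of arbitrary sets of formulas (no negation); $\equiv_{\mathcal P_{\infty\omega}}$ means satisfying the same $\mathcal P_{\infty\omega}$-sentences. *)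

theory Defs
  imports Main
begin

text \<open>A structure for the language with one binary relation symbol R is a pair
  (A, r) with carrier A and interpretation r (only its values on A matter).\<close>

definition condensation ::
  "'a set \<Rightarrow> ('a \<Rightarrow> 'a \<Rightarrow> bool) \<Rightarrow> 'b set \<Rightarrow> ('b \<Rightarrow> 'b \<Rightarrow> bool) \<Rightarrow> ('a \<Rightarrow> 'b) \<Rightarrow> bool" where
  "condensation A r B s F \<longleftrightarrow>
     bij_betw F A B \<and> (\<forall>x\<in>A. \<forall>x'\<in>A. r x x' \<longrightarrow> s (F x) (F x'))"

definition condensable :: "'a set \<Rightarrow> ('a \<Rightarrow> 'a \<Rightarrow> bool) \<Rightarrow> 'b set \<Rightarrow> ('b \<Rightarrow> 'b \<Rightarrow> bool) \<Rightarrow> bool" where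
  "condensable A r B s \<longleftrightarrow> (\<exists>F. condensation A r B s F)"

definition bicondensable :: "'a set \<Rightarrow> ('a \<Rightarrow> 'a \<Rightarrow> bool) \<Rightarrow> 'b set \<Rightarrow> ('b \<Rightarrow> 'b \<Rightarrow> bool) \<Rightarrow> bool" where
  "bicondensable A r B s \<longleftrightarrow> condensable A r B s \<and> condensable B s A r"

datatype fo = FEq nat nat | FRel nat nat | FNot fo | FAnd fo fo | FEx nat fo

primrec fo_fv :: "fo \<Rightarrow> nat set" where
  "fo_fv (FEq i j) = {i, j}"
| "fo_fv (FRel i j) = {i, j}"
| "fo_fv (FNot p) = fo_fv p"
| "fo_fv (FAnd p q) = fo_fv p \<union> fo_fv q"
| "fo_fv (FEx i p) = fo_fv p - {i}"

primrec fo_sat :: "'a set \<Rightarrow> ('a \<Rightarrow> 'a \<Rightarrow> bool) \<Rightarrow> (nat \<Rightarrow> 'a) \<Rightarrow> fo \<Rightarrow> bool" where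
  "fo_sat A r s (FEq i j) \<longleftrightarrow> s i = s j"
| "fo_sat A r s (FRel i j) \<longleftrightarrow> r (s i) (s j)"
| "fo_sat A r s (FNot p) \<longleftrightarrow> \<not> fo_sat A r s p"
| "fo_sat A r s (FAnd p q) \<longleftrightarrow> fo_sat A r s p \<and> fo_sat A r s q"
| "fo_sat A r s (FEx i p) \<longleftrightarrow> (\<exists>a\<in>A. fo_sat A r (s(i := a)) p)"

definition fo_models :: "'a set \<Rightarrow> ('a \<Rightarrow> 'a \<Rightarrow> bool) \<Rightarrow> fo \<Rightarrow> bool" where
  "fo_models A r p \<longleftrightarrow> (\<forall>s. range s \<subseteq> A \<longrightarrow> fo_sat A r s p)"

definition elem_equiv :: "'a set \<Rightarrow> ('a \<Rightarrow> 'a \<Rightarrow> bool) \<Rightarrow> 'b set \<Rightarrow> ('b \<Rightarrow> 'b \<Rightarrow> bool) \<Rightarrow> bool" where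
  "elem_equiv A r B s \<longleftrightarrow>
     (\<forall>p. fo_fv p = {} \<longrightarrow> (fo_models A r p \<longleftrightarrow> fo_models B s p))"

text \<open>Variables range over the type 'v; a conjunction/disjunction of an arbitrary set of
  formulas is given by an index set I :: 'i set and a family f :: 'i \<Rightarrow> formula.
  Both 'v and 'i are arbitrary types (universally quantified in the theorem).\<close>

datatype ('v, 'i) pfm =
    PEq 'v 'v | PRel 'v 'v | PNeq 'v 'v
  | PAll 'v "('v, 'i) pfm" | PEx 'v "('v, 'i) pfm"
  | PConj "'i set" "'i \<Rightarrow> ('v, 'i) pfm" | PDisj "'i set" "'i \<Rightarrow> ('v, 'i) pfm"

primrec pfm_fv :: "('v, 'i) pfm \<Rightarrow> 'v set" where
  "pfm_fv (PEq i j) = {i, j}"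
| "pfm_fv (PRel i j) = {i, j}"
| "pfm_fv (PNeq i j) = {i, j}"
| "pfm_fv (PAll i p) = pfm_fv p - {i}"
| "pfm_fv (PEx i p) = pfm_fv p - {i}"
| "pfm_fv (PConj I f) = \<Union> ((pfm_fv \<circ> f) ` I)"
| "pfm_fv (PDisj I f) = \<Union> ((pfm_fv \<circ> f) ` I)"

primrec pfm_sat :: "'a set \<Rightarrow> ('a \<Rightarrow> 'a \<Rightarrow> bool) \<Rightarrow> ('v \<Rightarrow> 'a) \<Rightarrow> ('v, 'i) pfm \<Rightarrow> bool" where
  "pfm_sat A r s (PEq i j) \<longleftrightarrow> s i = s j"
| "pfm_sat A r s (PRel i j) \<longleftrightarrow> r (s i) (s j)"
| "pfm_sat A r s (PNeq i j) \<longleftrightarrow> s i \<noteq> s j"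
| "pfm_sat A r s (PAll i p) \<longleftrightarrow> (\<forall>a\<in>A. pfm_sat A r (s(i := a)) p)"
| "pfm_sat A r s (PEx i p) \<longleftrightarrow> (\<exists>a\<in>A. pfm_sat A r (s(i := a)) p)"
| "pfm_sat A r s (PConj I f) \<longleftrightarrow> (\<forall>k\<in>I. pfm_sat A r s (f k))"
| "pfm_sat A r s (PDisj I f) \<longleftrightarrow> (\<exists>k\<in>I. pfm_sat A r s (f k))"

definition pfm_models :: "'a set \<Rightarrow> ('a \<Rightarrow> 'a \<Rightarrow> bool) \<Rightarrow> ('v, 'i) pfm \<Rightarrow> bool" where
  "pfm_models A r p \<longleftrightarrow> (\<forall>s. range s \<subseteq> A \<longrightarrow> pfm_sat A r s p)"

definition pinf_equiv ::
  "'v itself \<Rightarrow> 'i itself \<Rightarrow> 'a set \<Rightarrow> ('a \<Rightarrow> 'a \<Rightarrow> bool) \<Rightarrow> 'b set \<Rightarrow> ('b \<Rightarrow> 'b \<Rightarrow> bool) \<Rightarrow> bool" where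
  "pinf_equiv _ _ A r B s \<longleftrightarrow>
     (\<forall>p :: ('v, 'i) pfm. pfm_fv p = {} \<longrightarrow> (pfm_models A r p \<longleftrightarrow> pfm_models B s p))"

text \<open>The carrier is \<omega>_1, given abstractly as a set W of cardinality \<aleph>_1 together with
  an injective enumeration e : \<omega> \<rightarrow> W of the finite ordinals (e n plays the role of n).\<close>

definition rho :: "(nat \<Rightarrow> 'a) \<Rightarrow> 'a set \<Rightarrow> 'a \<Rightarrow> 'a \<Rightarrow> bool" where
  "rho e W x y \<longleftrightarrow> x \<in> W \<and> y \<in> W \<and>
     (x = y \<or> (x \<in> e ` {0, 1} \<and> y \<in> e ` {0, 1}) \<or> (x \<in> e ` {2..} \<and> y \<in> e ` {2..}))"

definition sigma :: "(nat \<Rightarrow> 'a) \<Rightarrow> 'a set \<Rightarrow> 'a \<Rightarrow> 'a \<Rightarrow> bool" where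
  "sigma e W x y \<longleftrightarrow> x \<in> W \<and> y \<in> W \<and>
     (x = y \<or> (x \<in> W - range e \<and> y \<in> W - range e))"

end

theory Submission
  imports Defs "HOL-Library.Countable_Set"
begin

text \<open>Positive formulas are preserved along back-and-forth systems of partial maps that
  preserve equality, inequality and the relation, but need not reflect the relation.
  Matching the nontrivial classes of either structure with a single infinite class of the
  other gives such systems in both directions, so \<open>(W, \<rho>)\<close> and \<open>(W, \<sigma>)\<close> satisfy the same
  positive sentences.  Negation sees the difference: \<open>\<rho>\<close> has a two-element class and \<open>\<sigma>\<close>
  does not.  Finally, a condensation of \<open>(W, \<sigma>)\<close> onto \<open>(W, \<rho>)\<close> would map the uncountable
  \<open>\<sigma>\<close>-class injectively into a single, countable, \<open>\<rho>\<close>-class.\<close>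

text \<open>\<open>Z s t V\<close>: the assignments \<open>s\<close> and \<open>t\<close>, restricted to the variables in \<open>V\<close>, are
  related.\<close>

definition positive_back_and_forth ::
  "'a set \<Rightarrow> ('a \<Rightarrow> 'a \<Rightarrow> bool) \<Rightarrow> 'b set \<Rightarrow> ('b \<Rightarrow> 'b \<Rightarrow> bool)
    \<Rightarrow> (('v \<Rightarrow> 'a) \<Rightarrow> ('v \<Rightarrow> 'b) \<Rightarrow> 'v set \<Rightarrow> bool) \<Rightarrow> bool" where
  "positive_back_and_forth A r B q Z \<longleftrightarrow>
     (\<forall>s t V. Z s t V \<longrightarrow>
        (\<forall>u\<in>V. \<forall>w\<in>V. (s u = s w \<longleftrightarrow> t u = t w) \<and> (r (s u) (s w) \<longrightarrow> q (t u) (t w)))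
      \<and> (\<forall>i. \<forall>a\<in>A. \<exists>b\<in>B. Z (s(i := a)) (t(i := b)) (insert i V))
      \<and> (\<forall>i. \<forall>b\<in>B. \<exists>a\<in>A. Z (s(i := a)) (t(i := b)) (insert i V)))"

lemma pfm_sat_transfer:
  fixes \<phi> :: "('v, 'i) pfm"
  assumes Z: "positive_back_and_forth A r B q Z"
  shows "Z s t V \<Longrightarrow> pfm_fv \<phi> \<subseteq> V \<Longrightarrow> pfm_sat A r s \<phi> \<Longrightarrow> pfm_sat B q t \<phi>"
proof (induction \<phi> arbitrary: s t V)
  case (PAll i p)
  show ?case
  proof (simp, intro ballI)
    fix b assume "b \<in> B"
    then obtain a where "a \<in> A" and Z': "Z (s(i := a)) (t(i := b)) (insert i V)"
      using Z PAll.prems(1) unfolding positive_back_and_forth_def by blast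
    have fv: "pfm_fv p \<subseteq> insert i V" using PAll.prems(2) by auto
    have "pfm_sat A r (s(i := a)) p" using PAll.prems(3) \<open>a \<in> A\<close> by simp
    then show "pfm_sat B q (t(i := b)) p" by (rule PAll.IH[OF Z' fv])
  qed
next
  case (PEx i p)
  then obtain a where "a \<in> A" and sat: "pfm_sat A r (s(i := a)) p" by auto
  then obtain b where "b \<in> B" and Z': "Z (s(i := a)) (t(i := b)) (insert i V)"
    using Z PEx.prems(1) unfolding positive_back_and_forth_def by blast
  have fv: "pfm_fv p \<subseteq> insert i V" using PEx.prems(2) by auto
  have "pfm_sat B q (t(i := b)) p" by (rule PEx.IH[OF Z' fv sat])
  with \<open>b \<in> B\<close> show ?case by (simp only: pfm_sat.simps) blast
next
  case (PConj I f)
  then show ?case using PConj.IH[OF rangeI] by (auto simp: UN_subset_iff)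
next
  case (PDisj I f)
  then obtain k where "k \<in> I" and sat: "pfm_sat A r s (f k)" by auto
  moreover have "pfm_fv (f k) \<subseteq> V" using PDisj.prems(2) \<open>k \<in> I\<close> by auto
  ultimately show ?case using PDisj.IH[OF rangeI PDisj.prems(1)] by auto
qed (use Z in \<open>auto simp: positive_back_and_forth_def\<close>)

lemma pfm_models_transfer:
  fixes \<phi> :: "('v, 'i) pfm" and Z :: "('v \<Rightarrow> 'a) \<Rightarrow> ('v \<Rightarrow> 'b) \<Rightarrow> 'v set \<Rightarrow> bool"
  assumes Z: "positive_back_and_forth A r B q Z" and empty: "\<And>s t. Z s t {}" and "A \<noteq> {}"
    and "pfm_fv \<phi> = {}" and "pfm_models A r \<phi>"
  shows "pfm_models B q \<phi>"
  unfolding pfm_models_def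
proof (intro allI impI)
  fix t :: "'v \<Rightarrow> 'b"
  obtain a where "a \<in> A" using \<open>A \<noteq> {}\<close> by blast
  then have sat: "pfm_sat A r (\<lambda>_. a) \<phi>"
    using \<open>pfm_models A r \<phi>\<close> unfolding pfm_models_def by auto
  have fv: "pfm_fv \<phi> \<subseteq> {}" using \<open>pfm_fv \<phi> = {}\<close> by simp
  show "pfm_sat B q t \<phi>" by (rule pfm_sat_transfer[OF Z empty fv sat])
qed

definition class_matching ::
  "'a set \<Rightarrow> 'a set \<Rightarrow> 'b set \<Rightarrow> 'b set \<Rightarrow> ('v \<Rightarrow> 'a) \<Rightarrow> ('v \<Rightarrow> 'b) \<Rightarrow> 'v set \<Rightarrow> bool" where
  "class_matching A C B D s t V \<longleftrightarrow> finite V \<and>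
     (\<forall>u\<in>V. \<forall>w\<in>V. s u = s w \<longleftrightarrow> t u = t w) \<and>
     (\<forall>u\<in>V. s u \<in> A \<and> t u \<in> B \<and> (s u \<in> C \<longrightarrow> t u \<in> D))"

lemma class_matching_update:
  assumes "class_matching A C B D s t V" and "a \<in> A" "b \<in> B" and "a \<in> C \<longrightarrow> b \<in> D"
    and "\<forall>u\<in>V - {i}. s u = a \<longleftrightarrow> t u = b"
  shows "class_matching A C B D (s(i := a)) (t(i := b)) (insert i V)"
  using assms unfolding class_matching_def by auto

lemma class_matching_empty: "class_matching A C B D s t {}"
  by (simp add: class_matching_def)

lemma class_matching_copy:
  assumes "class_matching A C B D s t V" and "u \<in> V"
  shows "class_matching A C B D (s(i := s u)) (t(i := t u)) (insert i V)"
  using assms by (intro class_matching_update) (auto simp: class_matching_def)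

lemma class_matching_fresh:
  assumes "class_matching A C B D s t V" and "a \<in> A" "b \<in> B" and "a \<in> C \<longrightarrow> b \<in> D"
    and "a \<notin> s ` (V - {i})" "b \<notin> t ` (V - {i})"
  shows "class_matching A C B D (s(i := a)) (t(i := b)) (insert i V)"
  using assms by (intro class_matching_update) auto

text \<open>A new point is matched with a fresh point of \<open>D\<close> going forth, and with a fresh point
  outside \<open>C\<close> coming back; this is where the two infinity hypotheses are used.\<close>

lemma class_matching_back_and_forth:
  assumes r: "\<forall>x\<in>A. \<forall>y\<in>A. r x y \<longrightarrow> x = y \<or> x \<in> C \<and> y \<in> C"
    and q_refl: "\<forall>y\<in>B. q y y" and q_D: "\<forall>y\<in>D. \<forall>y'\<in>D. q y y'"
    and "D \<subseteq> B" and "infinite D" and "infinite (A - C)"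
  shows "positive_back_and_forth A r B q (class_matching A C B D)"
proof (unfold positive_back_and_forth_def, intro allI impI, goal_cases)
  case (1 s t V)
  note Z = this
  then have fin: "finite (s ` V)" "finite (t ` V)"
    unfolding class_matching_def by auto
  have "\<forall>u\<in>V. \<forall>w\<in>V. (s u = s w \<longleftrightarrow> t u = t w) \<and> (r (s u) (s w) \<longrightarrow> q (t u) (t w))"
  proof (intro ballI)
    fix u w assume "u \<in> V" "w \<in> V"
    with Z have match: "s u \<in> A" "s w \<in> A" "t u \<in> B" "s u = s w \<longleftrightarrow> t u = t w"
      "s u \<in> C \<longrightarrow> t u \<in> D" "s w \<in> C \<longrightarrow> t w \<in> D"
      unfolding class_matching_def by blast+
    moreover have "q (t u) (t w)" if "r (s u) (s w)"
    proof -
      have "s u = s w \<or> s u \<in> C \<and> s w \<in> C"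
        using r \<open>s u \<in> A\<close> \<open>s w \<in> A\<close> that by blast
      with match q_refl q_D show ?thesis by auto
    qed
    ultimately show "(s u = s w \<longleftrightarrow> t u = t w) \<and> (r (s u) (s w) \<longrightarrow> q (t u) (t w))"
      by blast
  qed
  moreover have "\<exists>b\<in>B. class_matching A C B D (s(i := a)) (t(i := b)) (insert i V)"
    if "a \<in> A" for i a
  proof (cases "a \<in> s ` (V - {i})")
    case True
    then obtain u where "u \<in> V" "a = s u" by blast
    moreover have "t u \<in> B" using Z \<open>u \<in> V\<close> unfolding class_matching_def by blast
    ultimately show ?thesis using class_matching_copy[OF Z] by blast
  next
    case False
    have "infinite (D - t ` V)" using \<open>infinite D\<close> fin(2) by (rule Diff_infinite_finite[rotated])
    then obtain b where "b \<in> D - t ` V" using infinite_imp_nonempty by blast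
    then have "b \<in> D" "b \<notin> t ` (V - {i})" by auto
    with False \<open>a \<in> A\<close> \<open>D \<subseteq> B\<close> show ?thesis
      by (intro bexI[of _ b] class_matching_fresh[OF Z]) auto
  qed
  moreover have "\<exists>a\<in>A. class_matching A C B D (s(i := a)) (t(i := b)) (insert i V)"
    if "b \<in> B" for i b
  proof (cases "b \<in> t ` (V - {i})")
    case True
    then obtain u where "u \<in> V" "b = t u" by blast
    moreover have "s u \<in> A" using Z \<open>u \<in> V\<close> unfolding class_matching_def by blast
    ultimately show ?thesis using class_matching_copy[OF Z] by blast
  next
    case False
    have "infinite (A - C - s ` V)" using \<open>infinite (A - C)\<close> fin(1) by (rule Diff_infinite_finite[rotated])
    then obtain a where "a \<in> A - C - s ` V" using infinite_imp_nonempty by blast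
    then have "a \<in> A - C" "a \<notin> s ` (V - {i})" by auto
    with False \<open>b \<in> B\<close> show ?thesis
      by (intro bexI[of _ a] class_matching_fresh[OF Z]) auto
  qed
  ultimately show "(\<forall>u\<in>V. \<forall>w\<in>V. (s u = s w \<longleftrightarrow> t u = t w) \<and> (r (s u) (s w) \<longrightarrow> q (t u) (t w)))
      \<and> (\<forall>i. \<forall>a\<in>A. \<exists>b\<in>B. class_matching A C B D (s(i := a)) (t(i := b)) (insert i V))
      \<and> (\<forall>i. \<forall>b\<in>B. \<exists>a\<in>A. class_matching A C B D (s(i := a)) (t(i := b)) (insert i V))"
    by blast
qed

lemma infinite_image_atLeast:
  fixes e :: "nat \<Rightarrow> 'a"
  assumes "inj e"
  shows "infinite (e ` {n..})"
  using finite_imageD[OF _ inj_on_subset[OF assms subset_UNIV]] infinite_Ici by blast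

text \<open>Going from \<open>\<rho>\<close> to \<open>\<sigma>\<close> the classes \<open>{0, 1}\<close> and \<open>\<omega> - 2\<close> are matched inside the
  big \<open>\<sigma>\<close>-class; going back, the big \<open>\<sigma>\<close>-class is matched inside \<open>\<omega> - 2\<close>.\<close>

lemma pinf_equiv_rho_sigma:
  assumes "inj e" and "range e \<subseteq> W" and "infinite (W - range e)"
  shows "pinf_equiv TYPE('v) TYPE('i) W (rho e W) W (sigma e W)"
  unfolding pinf_equiv_def
proof (intro allI impI iffI)
  have "W \<noteq> {}" using assms(2) by blast
  fix \<phi> :: "('v, 'i) pfm" assume closed: "pfm_fv \<phi> = {}"
  {
    assume "pfm_models W (rho e W) \<phi>"
    moreover have "positive_back_and_forth W (rho e W) W (sigma e W)
        (class_matching W (range e) W (W - range e))"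
      using assms by (intro class_matching_back_and_forth) (auto simp: rho_def sigma_def)
    ultimately show "pfm_models W (sigma e W) \<phi>"
      using pfm_models_transfer class_matching_empty \<open>W \<noteq> {}\<close> closed by blast
  next
    assume "pfm_models W (sigma e W) \<phi>"
    moreover have "W - (W - range e) = range e" using assms(2) by blast
    then have "positive_back_and_forth W (sigma e W) W (rho e W)
        (class_matching W (W - range e) W (e ` {2..}))"
      using assms infinite_image_atLeast[OF assms(1), of 0] infinite_image_atLeast[OF assms(1), of 2]
      by (intro class_matching_back_and_forth) (auto simp: rho_def sigma_def)
    ultimately show "pfm_models W (rho e W) \<phi>"
      using pfm_models_transfer class_matching_empty \<open>W \<noteq> {}\<close> closed by blast
  }
qed

definition two_element_class :: fo where
  "two_element_class = FEx 0 (FEx 1 (FAnd (FNot (FEq 0 1)) (FAnd (FRel 0 1)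
     (FNot (FEx 2 (FAnd (FRel 0 2) (FAnd (FNot (FEq 2 0)) (FNot (FEq 2 1)))))))))"

lemma fo_fv_two_element_class: "fo_fv two_element_class = {}"
  by (auto simp: two_element_class_def)

lemma fo_models_two_element_class:
  assumes "A \<noteq> {}"
  shows "fo_models A r two_element_class \<longleftrightarrow>
    (\<exists>a\<in>A. \<exists>b\<in>A. a \<noteq> b \<and> r a b \<and> (\<forall>c\<in>A. r a c \<longrightarrow> c = a \<or> c = b))"
proof -
  obtain x where "x \<in> A" using assms by blast
  have "fo_sat A r s two_element_class \<longleftrightarrow>
      (\<exists>a\<in>A. \<exists>b\<in>A. a \<noteq> b \<and> r a b \<and> (\<forall>c\<in>A. r a c \<longrightarrow> c = a \<or> c = b))" for s
    by (auto simp: two_element_class_def)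
  note sat_iff = this
  show ?thesis
  proof
    assume "fo_models A r two_element_class"
    then have "fo_sat A r (\<lambda>_. x) two_element_class"
      using \<open>x \<in> A\<close> unfolding fo_models_def by auto
    then show "\<exists>a\<in>A. \<exists>b\<in>A. a \<noteq> b \<and> r a b \<and> (\<forall>c\<in>A. r a c \<longrightarrow> c = a \<or> c = b)"
      using sat_iff by blast
  qed (use sat_iff in \<open>auto simp: fo_models_def\<close>)
qed

lemma not_elem_equiv_rho_sigma:
  assumes "inj e" and "range e \<subseteq> W" and "infinite (W - range e)"
  shows "\<not> elem_equiv W (rho e W) W (sigma e W)"
proof -
  have "W \<noteq> {}" using assms(2) by blast
  have "e 0 \<noteq> e 1" and e0: "e 0 \<notin> e ` {2..}" using assms(1) by (auto simp: inj_eq)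
  moreover have "rho e W (e 0) (e 1)" using assms(2) by (auto simp: rho_def)
  moreover have "c = e 0 \<or> c = e 1" if "rho e W (e 0) c" for c
    using that e0 by (auto simp: rho_def)
  ultimately have "fo_models W (rho e W) two_element_class"
    using assms(2) unfolding fo_models_two_element_class[OF \<open>W \<noteq> {}\<close>] by blast
  moreover have "\<not> fo_models W (sigma e W) two_element_class"
  proof
    assume "fo_models W (sigma e W) two_element_class"
    then obtain a b where "a \<noteq> b" "sigma e W a b" and
      only: "\<forall>c\<in>W. sigma e W a c \<longrightarrow> c = a \<or> c = b"
      unfolding fo_models_two_element_class[OF \<open>W \<noteq> {}\<close>] by blast
    then have "a \<in> W - range e" by (auto simp: sigma_def)
    have "infinite (W - range e - {a, b})" using assms(3) by (simp add: Diff_infinite_finite)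
    then obtain c where "c \<in> W - range e - {a, b}" using infinite_imp_nonempty by blast
    with only \<open>a \<in> W - range e\<close> show False by (auto simp: sigma_def)
  qed
  ultimately show ?thesis
    unfolding elem_equiv_def using fo_fv_two_element_class by blast
qed

lemma not_condensable_sigma_rho:
  assumes "uncountable (W - range e)"
  shows "\<not> condensable W (sigma e W) W (rho e W)"
proof
  assume "condensable W (sigma e W) W (rho e W)"
  then obtain F where "inj_on F W" and F: "\<forall>x\<in>W. \<forall>x'\<in>W. sigma e W x x' \<longrightarrow> rho e W (F x) (F x')"
    unfolding condensable_def condensation_def bij_betw_def by blast
  obtain x0 where x0: "x0 \<in> W - range e" using assms by (metis countable_empty ex_in_conv)
  have "F ` (W - range e) \<subseteq> insert (F x0) (range e)"
  proof
    fix y assume "y \<in> F ` (W - range e)"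
    then obtain x where x: "x \<in> W - range e" "y = F x" by blast
    then have "rho e W (F x0) (F x)" using F x0 by (auto simp: sigma_def)
    then show "y \<in> insert (F x0) (range e)" using x by (auto simp: rho_def)
  qed
  then have "countable (F ` (W - range e))" by (rule countable_subset) simp
  moreover have "inj_on F (W - range e)" using \<open>inj_on F W\<close> by (rule inj_on_subset) blast
  ultimately show False using assms countable_image_inj_on by blast
qed

context
  includes cardinal_syntax
begin

lemma uncountable_if_card_of_ordIso_cardSuc_nat:
  assumes "|W| =o cardSuc |UNIV :: nat set|"
  shows "uncountable W"
proof
  assume "countable W"
  then have "|W| \<le>o |UNIV :: nat set|"
    unfolding countable_def using card_of_ordLeq by blast
  also have "|UNIV :: nat set| <o cardSuc |UNIV :: nat set|"
    by (rule cardSuc_greater) (rule card_of_Card_order)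
  finally show False using assms not_ordLess_ordIso by blast
qed

end

theorem mainTheorem17:
  fixes W :: "'a set" and e :: "nat \<Rightarrow> 'a"
  assumes "(card_of W, cardSuc (card_of (UNIV :: nat set))) \<in> ordIso"
    and "inj e" and "range e \<subseteq> W"
  shows "pinf_equiv TYPE('v) TYPE('i) W (rho e W) W (sigma e W)
         \<and> \<not> elem_equiv W (rho e W) W (sigma e W)
         \<and> \<not> bicondensable W (rho e W) W (sigma e W)"
proof -
  have "uncountable (W - range e)"
    using uncountable_if_card_of_ordIso_cardSuc_nat[OF assms(1)]
    by (rule uncountable_minus_countable) simp
  then have "infinite (W - range e)" using countable_finite by blast
  have "\<not> condensable W (sigma e W) W (rho e W)"
    by (rule not_condensable_sigma_rho) fact
  then show ?thesis
    unfolding bicondensable_def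
    using pinf_equiv_rho_sigma[OF assms(2,3) \<open>infinite (W - range e)\<close>]
      not_elem_equiv_rho_sigma[OF assms(2,3) \<open>infinite (W - range e)\<close>] by blast
qed

end
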